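(* Let $0<a<1<b$, $\varphi(y)=\max\{y^a,y^b\}$ and $\varphi^{-1}(y)=\min\{y^{1/a},y^{1/b}\}$ for $y>0$, let $c,d>0$ with $cd\le1$, and $g(x)=xF(c,d;c+d;x)$ for $x\in(0,1)$. Then for every $x\in(0,1)$, $$g(x)\le b\,\varphi\!\left(g\!\left(\frac{\varphi^{-1}(x/(1-x))}{1+\varphi^{-1}(x/(1-x))}\right)\right).$$
   Context: $F(a,b;c;x)$ is the Gaussian hypergeometric function $\sum_{n\ge0}\frac{(a)_n(b)_n}{(c)_n}\frac{x^n}{n!}$ ($|x|<1$), with $(a)_n=a(a+1)\cdots(a+n-1)$, $(a)_0=1$. The exponents $a,b$ are distinct from the hypergeometric parameters $c,d$. *)

theory Defs
  imports "HOL-Analysis.Analysis"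
begin

definition hyp2F1 :: "real \<Rightarrow> real \<Rightarrow> real \<Rightarrow> real \<Rightarrow> real" where
  "hyp2F1 a b c x = (\<Sum>n. pochhammer a n * pochhammer b n / (pochhammer c n * fact n) * x ^ n)"

definition phi :: "real \<Rightarrow> real \<Rightarrow> real \<Rightarrow> real" where
  "phi a b y = max (y powr a) (y powr b)"

definition phi_inv :: "real \<Rightarrow> real \<Rightarrow> real \<Rightarrow> real" where
  "phi_inv a b y = min (y powr (1/a)) (y powr (1/b))"

end

theory Submission
  imports Defs
begin

(*
  Write F(x) = F(c,d;c+d;x) = sum A_n x^n and g(x) = x F(x).  The hypothesis cd <= 1 makes
  both coefficient sequences A_n and (n+1) A_n nonincreasing.  By Abel summation,
  (1-x) sum a_n x^n is nonincreasing on [0,1) whenever a_n is nonincreasing and nonnegative;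
  applied to A_n and to (n+1) A_n (the coefficients of g') this shows that
    (i)  (1-x) F(x) is nonincreasing and at most 1, and
    (ii) (1-x) g'(x) is nonincreasing, i.e. g is concave as a function of L = -ln(1-x).
  Put t = x/(1-x), p = phi_inv(t) and y = p/(1+p), so that x = t/(1+t).
  If t < 1 then p = t^(1/a) and (i) gives g(x) = t (1-x) F(x) <= p^a (1-y) F(y) <= g(y)^a.
  If t >= 1 then p = t^(1/b), and 1 + p^b <= (1+p)^b yields L(x) <= b L(y); concavity of g in
  L together with g(0) = 0 then gives g(x) <= b g(y).  In both cases phi(z) dominates the bound.
  The file develops the power series facts, then the coefficient estimates, the concavity
  argument, the elementary facts about phi, the two regimes, and finally the theorem.
*)

lemma summable_bounded_coeffs:
  fixes f :: "nat \<Rightarrow> real"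
  assumes "\<And>n. \<bar>f n\<bar> \<le> C" "\<bar>x\<bar> < 1"
  shows "summable (\<lambda>n. f n * x ^ n)"
proof (rule summable_comparison_test)
  show "summable (\<lambda>n. C * \<bar>x\<bar> ^ n)"
    using assms(2) by (intro summable_mult summable_geometric) simp
  show "\<exists>N. \<forall>n\<ge>N. norm (f n * x ^ n) \<le> C * \<bar>x\<bar> ^ n"
    using assms(1) by (auto simp: abs_mult power_abs intro!: mult_right_mono)
qed

lemma summable_decseq_coeffs:
  fixes a :: "nat \<Rightarrow> real"
  assumes "decseq a" "\<And>n. 0 \<le> a n" "\<bar>x\<bar> < 1"
  shows "summable (\<lambda>n. a n * x ^ n)"
  using assms by (intro summable_bounded_coeffs[where C = "a 0"]) (auto dest: decseqD)

lemma one_minus_times_powser: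
  fixes a :: "nat \<Rightarrow> real"
  assumes S: "summable (\<lambda>n. a n * x ^ n)"
  shows "summable (\<lambda>n. (a (Suc n) - a n) * x ^ Suc n)"
    and "(1 - x) * (\<Sum>n. a n * x ^ n) = a 0 + (\<Sum>n. (a (Suc n) - a n) * x ^ Suc n)"
proof -
  have s1: "summable (\<lambda>n. a (Suc n) * x ^ Suc n)"
    using summable_ignore_initial_segment[OF S, of 1] by simp
  have s2: "summable (\<lambda>n. a n * x ^ Suc n)"
    using summable_mult2[OF S, of x] by (simp add: mult_ac)
  have diff: "(\<lambda>n. (a (Suc n) - a n) * x ^ Suc n) = (\<lambda>n. a (Suc n) * x ^ Suc n - a n * x ^ Suc n)"
    by (simp add: algebra_simps)
  show "summable (\<lambda>n. (a (Suc n) - a n) * x ^ Suc n)"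
    unfolding diff using s1 s2 by (rule summable_diff)
  have "(\<Sum>n. a n * x ^ n) = a 0 + (\<Sum>n. a (Suc n) * x ^ Suc n)"
    using suminf_split_head[OF S] by simp
  moreover have "x * (\<Sum>n. a n * x ^ n) = (\<Sum>n. a n * x ^ Suc n)"
    using suminf_mult[OF S, of x] by (simp add: mult_ac)
  moreover have "(\<Sum>n. (a (Suc n) - a n) * x ^ Suc n)
      = (\<Sum>n. a (Suc n) * x ^ Suc n) - (\<Sum>n. a n * x ^ Suc n)"
    unfolding diff using suminf_diff[OF s1 s2] by simp
  ultimately show "(1 - x) * (\<Sum>n. a n * x ^ n) = a 0 + (\<Sum>n. (a (Suc n) - a n) * x ^ Suc n)"
    by (simp add: algebra_simps)
qed

text \<open>For nonincreasing nonnegative coefficients the damped sum (1 - x) f(x) is nonincreasing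
  on [0,1): all the first differences are nonpositive.\<close>
lemma damped_powser_antimono:
  fixes a :: "nat \<Rightarrow> real"
  assumes a: "decseq a" "\<And>n. 0 \<le> a n" and zx: "0 \<le> z" "z \<le> x" "x < 1"
  shows "(1 - x) * (\<Sum>n. a n * x ^ n) \<le> (1 - z) * (\<Sum>n. a n * z ^ n)"
proof -
  have Sx: "summable (\<lambda>n. a n * x ^ n)" and Sz: "summable (\<lambda>n. a n * z ^ n)"
    using zx by (auto intro!: summable_decseq_coeffs a)
  have "(\<Sum>n. (a (Suc n) - a n) * x ^ Suc n) \<le> (\<Sum>n. (a (Suc n) - a n) * z ^ Suc n)"
  proof (rule suminf_le)
    fix n
    have "z ^ Suc n \<le> x ^ Suc n" using zx by (intro power_mono) auto
    moreover have "a (Suc n) \<le> a n" using a(1) by (simp add: decseq_Suc_iff)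
    ultimately show "(a (Suc n) - a n) * x ^ Suc n \<le> (a (Suc n) - a n) * z ^ Suc n"
      by (intro mult_left_mono_neg) auto
  qed (use one_minus_times_powser(1)[OF Sx] one_minus_times_powser(1)[OF Sz] in auto)
  then show ?thesis using one_minus_times_powser(2)[OF Sx] one_minus_times_powser(2)[OF Sz] by simp
qed

definition hg_coeff :: "real \<Rightarrow> real \<Rightarrow> nat \<Rightarrow> real" where
  "hg_coeff c d n = pochhammer c n * pochhammer d n / (pochhammer (c + d) n * fact n)"

lemma hyp2F1_zero_balanced: "hyp2F1 c d (c + d) x = (\<Sum>n. hg_coeff c d n * x ^ n)"
  by (simp add: hyp2F1_def hg_coeff_def)

lemma hg_coeff_0 [simp]: "hg_coeff c d 0 = 1"
  by (simp add: hg_coeff_def)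

lemma two_mult_le_add:
  fixes c d :: real
  assumes "c > 0" "d > 0" "c * d \<le> 1"
  shows "2 * (c * d) \<le> c + d"
proof -
  have "(c * d) * (c * d) \<le> (c * d) * 1" using assms by (intro mult_left_mono) auto
  moreover have "(c + d)^2 = (c - d)^2 + 4 * (c * d)" by (simp add: power2_eq_square algebra_simps)
  moreover have "(2 * (c * d))^2 = 4 * ((c * d) * (c * d))" by (simp add: power2_eq_square)
  ultimately have "(2 * (c * d))^2 \<le> (c + d)^2" using zero_le_power2[of "c - d"] by linarith
  then show ?thesis by (rule power2_le_imp_le) (use assms in auto)
qed

context
  fixes c d :: real
  assumes c_pos: "c > 0" and d_pos: "d > 0"
begin

lemma hg_coeff_pos: "hg_coeff c d n > 0"
  unfolding hg_coeff_def using c_pos d_pos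
  by (auto intro!: divide_pos_pos mult_pos_pos pochhammer_pos)

lemma hg_coeff_Suc:
  "hg_coeff c d (Suc n) = hg_coeff c d n * ((c + n) * (d + n) / ((c + d + n) * (n + 1)))"
proof -
  have "pochhammer (c + d) n > 0" using c_pos d_pos by (intro pochhammer_pos) auto
  moreover have "c + d + n > 0" using c_pos d_pos by simp
  ultimately show ?thesis unfolding hg_coeff_def
    by (simp add: pochhammer_Suc fact_Suc field_simps)
qed

context
  assumes cd_le_1: "c * d \<le> 1"
begin

text \<open>The coefficients A_n are nonincreasing: (c+n)(d+n) <= (c+d+n)(n+1) since cd <= c+d.\<close>
lemma hg_coeff_decseq: "decseq (hg_coeff c d)"
  unfolding decseq_Suc_iff
proof
  fix n :: nat
  have "(c + d + n) * (n + 1) - (c + n) * (d + n) = c + d + n - c * d"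
    by (simp add: algebra_simps)
  moreover have "0 < c * d" using c_pos d_pos by simp
  ultimately have "(c + n) * (d + n) \<le> (c + d + n) * (n + 1)"
    using two_mult_le_add[OF c_pos d_pos cd_le_1] by linarith
  then have "(c + n) * (d + n) / ((c + d + n) * (n + 1)) \<le> 1"
    using c_pos d_pos by (subst divide_le_eq_1) auto
  then show "hg_coeff c d (Suc n) \<le> hg_coeff c d n"
    unfolding hg_coeff_Suc using hg_coeff_pos[of n] by (intro mult_left_le) auto
qed

text \<open>The coefficients (n+1) A_n of the derivative of x F(x) are nonincreasing as well;
  with m = n + 1 this is the polynomial inequality
  (m+1)(c+m-1)(d+m-1) <= m^2 (c+d+m-1), whose defect is (1-cd)(m-1) + (c+d-2cd).\<close>
lemma weighted_hg_coeff_decseq: "decseq (\<lambda>n. real (Suc n) * hg_coeff c d n)"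
  unfolding decseq_Suc_iff
proof
  fix n :: nat
  define m where "m = real n + 1"
  have "m * m * (c + d + m - 1) - (m + 1) * (c + m - 1) * (d + m - 1)
      = (1 - c * d) * (m - 1) + (c + d - 2 * (c * d))"
    by (simp add: algebra_simps)
  moreover have "(1 - c * d) * (m - 1) \<ge> 0" using cd_le_1 by (simp add: m_def)
  ultimately have "(m + 1) * (c + m - 1) * (d + m - 1) \<le> m * m * (c + d + m - 1)"
    using two_mult_le_add[OF c_pos d_pos cd_le_1] by linarith
  moreover have "real (Suc (Suc n)) = m + 1" "real (Suc n) = m" "real (n + 1) = m"
    "c + real n = c + m - 1" "d + real n = d + m - 1" "c + d + real n = c + d + m - 1"
    by (simp_all add: m_def)
  ultimately have "real (Suc (Suc n)) * ((c + n) * (d + n)) \<le> real (Suc n) * ((c + d + n) * (n + 1))"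
    by (simp only:) (simp add: mult_ac)
  moreover have "(c + d + n) * (n + 1) > 0" using c_pos d_pos by (simp add: add_pos_nonneg)
  ultimately have "real (Suc (Suc n)) * ((c + n) * (d + n) / ((c + d + n) * (n + 1))) \<le> real (Suc n)"
    by (simp add: pos_divide_le_eq)
  then have "real (Suc (Suc n)) * ((c + n) * (d + n) / ((c + d + n) * (n + 1))) * hg_coeff c d n
      \<le> real (Suc n) * hg_coeff c d n"
    using hg_coeff_pos[of n] by (intro mult_right_mono) auto
  then show "real (Suc (Suc n)) * hg_coeff c d (Suc n) \<le> real (Suc n) * hg_coeff c d n"
    by (simp add: hg_coeff_Suc mult_ac)
qed

lemma hyp2F1_pos:
  assumes "0 < x" "x < 1"
  shows "0 < hyp2F1 c d (c + d) x"
proof -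
  have "summable (\<lambda>n. hg_coeff c d n * x ^ n)"
    using assms by (intro summable_decseq_coeffs hg_coeff_decseq) (auto simp: hg_coeff_pos less_imp_le)
  then show ?thesis
    unfolding hyp2F1_zero_balanced by (rule suminf_pos) (simp add: hg_coeff_pos assms)
qed

lemma g_nonneg: "0 \<le> x \<Longrightarrow> x < 1 \<Longrightarrow> 0 \<le> x * hyp2F1 c d (c + d) x"
  using hyp2F1_pos[of x] by (cases "x = 0") auto

lemma damped_hyp2F1_antimono:
  "0 \<le> z \<Longrightarrow> z \<le> x \<Longrightarrow> x < 1 \<Longrightarrow> (1 - x) * hyp2F1 c d (c + d) x \<le> (1 - z) * hyp2F1 c d (c + d) z"
  unfolding hyp2F1_zero_balanced
  by (rule damped_powser_antimono[OF hg_coeff_decseq less_imp_le[OF hg_coeff_pos]])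

lemma damped_hyp2F1_le_1: "0 \<le> x \<Longrightarrow> x < 1 \<Longrightarrow> (1 - x) * hyp2F1 c d (c + d) x \<le> 1"
  using damped_hyp2F1_antimono[of 0 x] by (simp add: hyp2F1_zero_balanced)

text \<open>Termwise differentiation of x F(x) = sum A_(n-1) x^n gives g'(x) = sum (n+1) A_n x^n.\<close>
lemma g_deriv:
  assumes "\<bar>u\<bar> < 1"
  shows "((\<lambda>x. x * hyp2F1 c d (c + d) x) has_real_derivative
           (\<Sum>n. real (Suc n) * hg_coeff c d n * u ^ n)) (at u)"
proof -
  define s where "s n = (if n = 0 then 0 else hg_coeff c d (n - 1))" for n
  have s_summable: "summable (\<lambda>n. s n * x ^ n)" if "\<bar>x\<bar> < 1" for x
    using that decseqD[OF hg_coeff_decseq, of 0] hg_coeff_pos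
    by (intro summable_bounded_coeffs[where C = 1]) (auto simp: s_def less_imp_le)
  have shift: "x * hyp2F1 c d (c + d) x = (\<Sum>n. s n * x ^ n)" if "\<bar>x\<bar> < 1" for x
    using powser_split_head(1)[OF s_summable[OF that]]
    by (simp add: hyp2F1_zero_balanced s_def mult_ac)
  have "((\<lambda>x. \<Sum>n. s n * x ^ n) has_real_derivative (\<Sum>n. diffs s n * u ^ n)) (at u)"
    by (rule termdiffs_strong[where K = "(1 + \<bar>u\<bar>) / 2"]) (use assms in \<open>auto intro!: s_summable\<close>)
  moreover have "diffs s = (\<lambda>n. real (Suc n) * hg_coeff c d n)"
    by (auto simp: diffs_def s_def)
  ultimately have "((\<lambda>x. \<Sum>n. s n * x ^ n) has_real_derivative
      (\<Sum>n. real (Suc n) * hg_coeff c d n * u ^ n)) (at u)"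
    by simp
  then show ?thesis
    by (rule has_field_derivative_transform_within_open[where S = "ball 0 1"])
       (use assms shift in auto)
qed

lemma damped_g_deriv_antimono:
  "0 \<le> z \<Longrightarrow> z \<le> x \<Longrightarrow> x < 1 \<Longrightarrow>
    (1 - x) * (\<Sum>n. real (Suc n) * hg_coeff c d n * x ^ n)
      \<le> (1 - z) * (\<Sum>n. real (Suc n) * hg_coeff c d n * z ^ n)"
  by (rule damped_powser_antimono[OF weighted_hg_coeff_decseq]) (auto simp: hg_coeff_pos less_imp_le)

end

end

section \<open>Concavity in the logarithmic scale\<close>

text \<open>If (1 - u) f'(u) is nonincreasing on [0,1), then f is concave as a function of
  L(u) = -ln(1 - u), because dL/du = 1/(1 - u); hence f lies below each of its tangents
  in this scale.\<close>
lemma below_log_scale_tangent: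
  fixes f f' :: "real \<Rightarrow> real"
  assumes deriv: "\<And>u. 0 \<le> u \<Longrightarrow> u < 1 \<Longrightarrow> (f has_real_derivative f' u) (at u)"
    and damped_antimono: "\<And>u v. 0 \<le> u \<Longrightarrow> u \<le> v \<Longrightarrow> v < 1 \<Longrightarrow> (1 - v) * f' v \<le> (1 - u) * f' u"
    and y: "0 \<le> y" "y < 1" and x: "0 \<le> x" "x < 1"
  shows "f x \<le> f y + (1 - y) * f' y * (ln (1 - y) - ln (1 - x))"
proof -
  define D where "D = (1 - y) * f' y"
  define h where "h u = f u + D * ln (1 - u)" for u
  have h_deriv: "(h has_real_derivative ((1 - u) * f' u - D) / (1 - u)) (at u)"
    if "0 \<le> u" "u < 1" for u
    unfolding h_def[abs_def] using that
    by (auto intro!: derivative_eq_intros deriv simp: field_simps)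
  have "h x \<le> h y"
  proof (cases "y \<le> x")
    case True
    show ?thesis
    proof (rule DERIV_nonpos_imp_nonincreasing[OF True])
      fix u assume u: "y \<le> u" "u \<le> x"
      have "(1 - u) * f' u \<le> D" unfolding D_def using damped_antimono[of y u] u y x by simp
      then show "\<exists>z. (h has_real_derivative z) (at u) \<and> z \<le> 0"
        using h_deriv[of u] u y x by (intro exI[of _ "((1 - u) * f' u - D) / (1 - u)"]) (auto intro: divide_nonpos_pos)
    qed
  next
    case False
    show ?thesis
    proof (rule DERIV_nonneg_imp_nondecreasing[of x y h])
      show "x \<le> y" using False by simp
      fix u assume u: "x \<le> u" "u \<le> y"
      have "D \<le> (1 - u) * f' u" unfolding D_def using damped_antimono[of u y] u y x by simp
      then show "\<exists>z. (h has_real_derivative z) (at u) \<and> 0 \<le> z"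
        using h_deriv[of u] u y x by (intro exI[of _ "((1 - u) * f' u - D) / (1 - u)"]) (auto intro: divide_nonneg_pos)
    qed
  qed
  then show ?thesis by (simp add: h_def D_def algebra_simps)
qed

text \<open>Comparing the tangent at y with the values at x and at 0: if f(0) = 0 and
  L(x) <= beta L(y) with beta >= 1, then f(x) <= beta f(y).\<close>
lemma log_scale_ratio_bound:
  fixes f f' :: "real \<Rightarrow> real"
  assumes deriv: "\<And>u. 0 \<le> u \<Longrightarrow> u < 1 \<Longrightarrow> (f has_real_derivative f' u) (at u)"
    and damped_antimono: "\<And>u v. 0 \<le> u \<Longrightarrow> u \<le> v \<Longrightarrow> v < 1 \<Longrightarrow> (1 - v) * f' v \<le> (1 - u) * f' u"
    and f0: "f 0 = 0" and y: "0 < y" "y \<le> x" "x < 1" and beta: "1 \<le> \<beta>" and fy: "0 \<le> f y"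
    and log_ratio: "- ln (1 - x) \<le> \<beta> * - ln (1 - y)"
  shows "f x \<le> \<beta> * f y"
proof -
  define D where "D = (1 - y) * f' y"
  define Lx Ly where "Lx = - ln (1 - x)" and "Ly = - ln (1 - y)"
  have at_x: "f x \<le> f y + D * (Lx - Ly)"
    using below_log_scale_tangent[OF deriv damped_antimono, of y x] y
    by (simp add: D_def Lx_def Ly_def algebra_simps)
  have at_0: "D * Ly \<le> f y"
    using below_log_scale_tangent[OF deriv damped_antimono, of y 0] y f0
    by (simp add: D_def Ly_def)
  have "Ly \<le> Lx" using y by (simp add: Lx_def Ly_def)
  have "f y \<le> \<beta> * f y" using mult_right_mono[OF beta fy] by simp
  show ?thesis
  proof (cases "D \<ge> 0")
    case True
    have "D * (Lx - Ly) \<le> D * ((\<beta> - 1) * Ly)"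
      using log_ratio True by (intro mult_left_mono) (simp_all add: Lx_def Ly_def algebra_simps)
    also have "\<dots> = (\<beta> - 1) * (D * Ly)" by simp
    also have "\<dots> \<le> (\<beta> - 1) * f y" using at_0 beta by (intro mult_left_mono) auto
    finally show ?thesis using at_x by (simp add: algebra_simps)
  next
    case False
    then have "D * (Lx - Ly) \<le> 0" using \<open>Ly \<le> Lx\<close> by (simp add: mult_nonpos_nonneg)
    then show ?thesis using at_x \<open>f y \<le> \<beta> * f y\<close> by linarith
  qed
qed

lemma le_phi:
  fixes a b z :: real
  assumes "a \<le> 1" "1 \<le> b" "0 \<le> z"
  shows "z \<le> phi a b z"
proof (cases "z \<le> 1")
  case True
  then have "z powr 1 \<le> z powr a" using assms by (intro powr_mono') auto
  then show ?thesis using assms by (auto simp: phi_def)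
next
  case False
  then have "z powr 1 \<le> z powr b" using assms by (intro powr_mono) auto
  then show ?thesis using False by (simp add: phi_def)
qed

lemma powr_le_phi: "z powr a \<le> phi a b z"
  by (simp add: phi_def)

lemma phi_inv_le_1:
  assumes "0 < a" "a \<le> b" "0 \<le> t" "t \<le> 1"
  shows "phi_inv a b t = t powr (1 / a)"
  using assms by (simp add: phi_inv_def frac_le powr_mono')

lemma phi_inv_ge_1:
  assumes "0 < a" "a \<le> b" "1 \<le> t"
  shows "phi_inv a b t = t powr (1 / b)"
  using assms by (simp add: phi_inv_def frac_le powr_mono)

text \<open>Superadditivity of p \<mapsto> p^b for b >= 1, in the form needed for L(x) <= b L(y).\<close>
lemma one_plus_powr_le:
  fixes p b :: real
  assumes "0 < p" "1 \<le> b"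
  shows "1 + p powr b \<le> (1 + p) powr b"
proof -
  have "p powr (b - 1) * p \<le> (1 + p) powr (b - 1) * p"
    using assms by (intro mult_right_mono powr_mono2) auto
  moreover have "1 \<le> (1 + p) powr (b - 1)" using assms by (intro ge_one_powr_ge_zero) auto
  moreover have "(1 + p) powr b = (1 + p) powr (b - 1) * (1 + p)" "p powr b = p powr (b - 1) * p"
    using powr_add[of "1 + p" "b - 1" 1] powr_add[of p "b - 1" 1] assms by simp_all
  ultimately show ?thesis by (simp add: algebra_simps)
qed

text \<open>In both regimes x = t/(1+t) and y = p/(1+p) with p = phi_inv(t) <= t, so 0 < y <= x < 1.\<close>

context
  fixes c d :: real
  assumes c_pos: "c > 0" and d_pos: "d > 0" and cd_le_1: "c * d \<le> 1"
begin

text \<open>For t < 1: the factor t^a of x = t (1-x) is p^a, and (1-x) F(x) <= (1-y) F(y) <= 1.\<close>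
lemma small_regime:
  assumes a: "0 < a" "a \<le> 1" and t: "0 < t" "t < 1"
  defines "p \<equiv> t powr (1 / a)"
  defines "x \<equiv> t / (1 + t)" and "y \<equiv> p / (1 + p)"
  shows "x * hyp2F1 c d (c + d) x \<le> (y * hyp2F1 c d (c + d) y) powr a"
proof -
  define F where "F = hyp2F1 c d (c + d)"
  define r where "r = (1 - y) * F y"
  have p: "0 < p" "p \<le> t" "t = p powr a"
    using t a powr_mono'[of 1 "1 / a" t] by (auto simp: p_def powr_powr)
  have y: "0 < y" "y \<le> x" "x < 1"
    using p t by (auto simp: x_def y_def field_simps)
  have "0 < r" "r \<le> 1"
    using y hyp2F1_pos[OF c_pos d_pos cd_le_1] damped_hyp2F1_le_1[OF c_pos d_pos cd_le_1]
    by (auto simp: r_def F_def)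
  have "y = p * (1 - y)" using p by (simp add: y_def field_simps)
  then have gy: "y * F y = p * r" by (simp add: r_def)
  have "x = t * (1 - x)" using t by (simp add: x_def field_simps)
  then have "x * F x = t * ((1 - x) * F x)" by simp
  also have "\<dots> \<le> t * r"
    using damped_hyp2F1_antimono[OF c_pos d_pos cd_le_1, of y x] y t unfolding r_def F_def
    by (intro mult_left_mono) auto
  also have "t * r = p powr a * r powr 1" using p \<open>0 < r\<close> by simp
  also have "\<dots> \<le> p powr a * r powr a"
    using \<open>0 < r\<close> \<open>r \<le> 1\<close> a by (intro mult_left_mono powr_mono') auto
  also have "\<dots> = (p * r) powr a" using p \<open>0 < r\<close> by (simp add: powr_mult)
  finally show ?thesis using gy by (simp add: F_def)
qed

text \<open>For t >= 1: 1 + p^b <= (1+p)^b gives L(x) <= b L(y), and the concavity of g in the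
  logarithmic scale gives g(x) <= b g(y).\<close>
lemma large_regime:
  assumes b: "1 \<le> b" and t: "1 \<le> t"
  defines "p \<equiv> t powr (1 / b)"
  defines "x \<equiv> t / (1 + t)" and "y \<equiv> p / (1 + p)"
  shows "x * hyp2F1 c d (c + d) x \<le> b * (y * hyp2F1 c d (c + d) y)"
proof (rule log_scale_ratio_bound[where f = "\<lambda>u. u * hyp2F1 c d (c + d) u"
      and f' = "\<lambda>u. \<Sum>n. real (Suc n) * hg_coeff c d n * u ^ n"])
  have p: "1 \<le> p" "p \<le> t" "t = p powr b"
    using t b powr_mono[of "1 / b" 1 t] by (auto simp: p_def powr_powr ge_one_powr_ge_zero)
  show y: "0 < y" "y \<le> x" "x < 1"
    using p t by (auto simp: x_def y_def field_simps)
  show "0 \<le> y * hyp2F1 c d (c + d) y"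
    using y g_nonneg[OF c_pos d_pos cd_le_1, of y] by simp
  have "- ln (1 - x) = ln (1 + t)" "- ln (1 - y) = ln (1 + p)"
    using t p by (simp_all add: x_def y_def ln_div field_simps)
  moreover have "ln (1 + t) \<le> ln ((1 + p) powr b)"
    using one_plus_powr_le[of p b] p b by (subst ln_le_cancel_iff) (auto simp: add_pos_nonneg)
  ultimately show "- ln (1 - x) \<le> b * - ln (1 - y)"
    using p by (simp add: ln_powr)
qed (use b g_deriv[OF c_pos d_pos cd_le_1] damped_g_deriv_antimono[OF c_pos d_pos cd_le_1] in auto)

end

theorem mainTheorem12:
  fixes a b c d :: real and g :: "real \<Rightarrow> real"
  assumes "0 < a" "a < 1" "1 < b"
    and "c > 0" "d > 0" "c * d \<le> 1"
    and "\<And>x. g x = x * hyp2F1 c d (c + d) x"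
  shows "\<forall>x\<in>{0<..<1}. g x \<le> b * phi a b (g (phi_inv a b (x / (1 - x)) / (1 + phi_inv a b (x / (1 - x)))))"
proof
  fix x :: real assume "x \<in> {0<..<1}"
  define t where "t = x / (1 - x)"
  define y where "y = phi_inv a b t / (1 + phi_inv a b t)"
  have t: "0 < t" "x = t / (1 + t)" using \<open>x \<in> {0<..<1}\<close> by (auto simp: t_def field_simps)
  have "0 \<le> phi_inv a b t" by (simp add: phi_inv_def)
  then have "0 \<le> g y" using g_nonneg[OF assms(4-6), of y] by (simp add: assms(7) y_def)
  have "0 \<le> phi a b (g y)" using order_trans[OF powr_ge_zero powr_le_phi] .
  then have phi_le: "phi a b (g y) \<le> b * phi a b (g y)"
    using assms(3) by (simp add: mult_le_cancel_right1)
  have "g x \<le> b * phi a b (g y)"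
  proof (cases "t < 1")
    case True
    then have "g x \<le> g y powr a"
      using small_regime[OF assms(4-6,1), of t] phi_inv_le_1[of a b t] assms(1-3) t
      by (simp add: assms(7) y_def)
    then show ?thesis using powr_le_phi[of "g y" a b] phi_le by linarith
  next
    case False
    then have "g x \<le> b * g y"
      using large_regime[OF assms(4-6), of b t] phi_inv_ge_1[of a b t] assms(1-3) t
      by (simp add: assms(7) y_def)
    also have "\<dots> \<le> b * phi a b (g y)"
      using le_phi[of a b "g y"] \<open>0 \<le> g y\<close> assms(2,3) by simp
    finally show ?thesis .
  qed
  then show "g x \<le> b * phi a b (g (phi_inv a b (x / (1 - x)) / (1 + phi_inv a b (x / (1 - x)))))"
    by (simp add: y_def t_def)
qed

end
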